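(* Let $f:\mathbb R^{n+m}\to\mathbb R$ be convex with $g(x)=\inf_y f(x,y)$ finite for every $x$. Let $H_1:\mathbb R^n\to\mathbb R^n$ be the single-valued inverse of $x\mapsto x+\nabla_xg$ and $H:\mathbb R^{n+m}\to\mathbb R^{n+m}$ the single-valued inverse of $(x,y)\mapsto (x,y)+\nabla_{(x,y)}f$, and define $J(x,u,y) = y - \pi_2 H(H_1(x+u)+u,y)$ for $(x,u,y)\in\mathbb R^n\times\mathbb R^n\times\mathbb R^m$, with $\pi_2:\mathbb R^{n+m}\to\mathbb R^m$ the second projection. Then $J$ is Lipschitz in $(x,u,y)$. Moreover, if $(x,y)\mapsto f(x,y) - \frac{\sigma}{2}\|y\|^2$ is convex for some $\sigma>0$, then there is $\lambda>0$ such that for all $x,u\in\mathbb R^n$ and $y_1,y_2\in\mathbb R^m$, $\|J(x,u,y_1) - J(x,u,y_2)\| \ge \lambda \|y_1-y_2\|$.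
   Context: For $h:\mathbb R^k\to\mathbb R$ and $z_0\in\mathbb R^k$, $\nabla_{z_0}h=\{u\in\mathbb R^k: h(z)-h(z_0)\ge u\cdot(z-z_0)\text{ for all } z \text{ sufficiently near } z_0\}$. "Inverse" means $H_1(u)=x\iff u\in x+\nabla_xg$ and $H(u,v)=(x,y)\iff (u,v)\in(x,y)+\nabla_{(x,y)}f$; such single-valued inverses exist for convex $g$, $f$. *)

theory Defs
  imports "HOL-Analysis.Analysis"
begin

definition subgrad :: "('a::real_inner \<Rightarrow> real) \<Rightarrow> 'a \<Rightarrow> 'a set" where
  "subgrad h z0 = {u. \<forall>\<^sub>F z in nhds z0. h z - h z0 \<ge> u \<bullet> (z - z0)}"

end

theory Submission
  imports Defs
begin

text \<open>
  H1 and H are the resolvents, i.e. the inverses of I + \<partial>g and I + \<partial>f, of convex functions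
  (g is convex as a partial infimum of f). Monotonicity of the subdifferential makes resolvents firmly
  nonexpansive, so J is a composition of Lipschitz maps. If f is \<sigma>-strongly convex in y, its
  subdifferential is strongly monotone in the y-component; comparing the resolvent at (a, y1)
  and (a, y2) then shows that the residual y - snd (H (a, y)) changes by at least
  \<sigma> / (\<sigma> + 2) times the change of y.
\<close>

text \<open>Local subgradients of convex functions are global: a local minimum of the convex function
  x \<mapsto> h x - v \<bullet> (x - z) is a global one.\<close>

lemma convex_on_subgrad_ineq:
  fixes h :: "'a::real_inner \<Rightarrow> real"
  assumes h: "convex_on UNIV h" and v: "v \<in> subgrad h z"
  shows "v \<bullet> (w - z) \<le> h w - h z"
proof -
  define k where "k x = h x - v \<bullet> (x - z)" for x
  have "convex_on UNIV (\<lambda>x. - (v \<bullet> (x - z)))"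
    by (rule convex_onI) (simp_all add: algebra_simps inner_diff_right inner_add_right)
  with h have k: "convex_on UNIV k"
    unfolding k_def using convex_on_add by fastforce
  from v obtain e where "e > 0" and "\<forall>x\<in>ball z e. k z \<le> k x"
    by (fastforce simp: subgrad_def k_def eventually_nhds_metric dist_commute mem_ball)
  then have "k z \<le> k w"
    using convex_local_global_minimum[OF _ k] by blast
  then show ?thesis by (simp add: k_def)
qed

lemma subgrad_monotone:
  fixes h :: "'a::real_inner \<Rightarrow> real"
  assumes "convex_on UNIV h" "v1 \<in> subgrad h z1" "v2 \<in> subgrad h z2"
  shows "0 \<le> (v1 - v2) \<bullet> (z1 - z2)"
  using convex_on_subgrad_ineq[OF assms(1,2), of z2] convex_on_subgrad_ineq[OF assms(1,3), of z1]
  by (simp add: inner_diff_left inner_diff_right inner_commute)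

lemma subgrad_strongly_monotone_snd:
  fixes f :: "'a::real_inner \<times> 'b::real_inner \<Rightarrow> real"
  assumes f: "convex_on UNIV f"
    and k: "convex_on UNIV (\<lambda>(x, y). f (x, y) - \<sigma> / 2 * (norm y)\<^sup>2)"
    and v1: "v1 \<in> subgrad f z1" and v2: "v2 \<in> subgrad f z2"
  shows "\<sigma> / 2 * (norm (snd z1 - snd z2))\<^sup>2 \<le> (v1 - v2) \<bullet> (z1 - z2)"
proof -
  \<comment> \<open>Both subgradient inequalities at the midpoint m, against strong convexity in y at m.\<close>
  define m where "m = (1 - 1 / 2) *\<^sub>R z1 + (1 / 2 :: real) *\<^sub>R z2"
  have "v1 \<bullet> (m - z1) \<le> f m - f z1" "v2 \<bullet> (m - z2) \<le> f m - f z2"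
    using convex_on_subgrad_ineq[OF f v1] convex_on_subgrad_ineq[OF f v2] by auto
  moreover have "m - z1 = (1 / 2) *\<^sub>R (z2 - z1)" "m - z2 = (1 / 2) *\<^sub>R (z1 - z2)"
    by (simp_all add: m_def algebra_simps flip: scaleR_add_left)
  ultimately have sub: "(v1 - v2) \<bullet> (z2 - z1) \<le> 4 * f m - 2 * f z1 - 2 * f z2"
    by (simp add: inner_diff_left inner_diff_right inner_commute)
  obtain x1 y1 x2 y2 where z: "z1 = (x1, y1)" "z2 = (x2, y2)" by fastforce
  have "f m - \<sigma> / 2 * (norm (snd m))\<^sup>2
      \<le> (1 - 1 / 2) * (f z1 - \<sigma> / 2 * (norm y1)\<^sup>2) + 1 / 2 * (f z2 - \<sigma> / 2 * (norm y2)\<^sup>2)"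
    using convex_onD[OF k, of "1 / 2" z1 z2] by (simp add: m_def z split_beta)
  moreover have "(norm (snd m))\<^sup>2 = ((norm y1)\<^sup>2 + (norm y2)\<^sup>2) / 2 - (norm (y1 - y2))\<^sup>2 / 4"
    by (simp add: m_def z power2_norm_eq_inner inner_add_left inner_add_right inner_diff_left
        inner_diff_right inner_commute field_simps)
  ultimately have "f m \<le> (f z1 + f z2) / 2 - \<sigma> / 8 * (norm (y1 - y2))\<^sup>2"
    by (simp add: field_simps)
  moreover have "(v1 - v2) \<bullet> (z1 - z2) = - ((v1 - v2) \<bullet> (z2 - z1))"
    by (simp add: inner_diff_right)
  ultimately show ?thesis
    using sub by (simp add: z field_simps)
qed

lemma convex_on_partial_INF:
  fixes f :: "'a::real_vector \<times> 'b::real_vector \<Rightarrow> real"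
  assumes f: "convex_on UNIV f" and bdd: "\<And>x. bdd_below (range (\<lambda>y. f (x, y)))"
  shows "convex_on UNIV (\<lambda>x. INF y. f (x, y))"
proof (rule convex_onI)
  let ?g = "\<lambda>x. INF y. f (x, y)"
  have INF_ge: "c \<le> a * ?g x" if "0 < a" "\<And>y. c \<le> a * f (x, y)" for a c x
  proof -
    have "c / a \<le> ?g x"
      by (rule cINF_greatest) (use that in \<open>simp_all add: pos_divide_le_eq mult.commute\<close>)
    with \<open>0 < a\<close> show ?thesis by (simp add: pos_divide_le_eq mult.commute)
  qed
  fix t :: real and x1 x2 :: 'a
  assume t: "0 < t" "t < 1"
  let ?m = "(1 - t) *\<^sub>R x1 + t *\<^sub>R x2"
  have bound: "?g ?m - t * f (x2, y2) \<le> (1 - t) * f (x1, y1)" for y1 y2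
  proof -
    have "?g ?m \<le> f (?m, (1 - t) *\<^sub>R y1 + t *\<^sub>R y2)"
      by (rule cINF_lower[OF bdd]) simp
    also have "(?m, (1 - t) *\<^sub>R y1 + t *\<^sub>R y2) = (1 - t) *\<^sub>R (x1, y1) + t *\<^sub>R (x2, y2)"
      by simp
    also have "f \<dots> \<le> (1 - t) * f (x1, y1) + t * f (x2, y2)"
      using convex_onD[OF f, of t "(x1, y1)" "(x2, y2)"] t by simp
    finally show ?thesis by simp
  qed
  have "?g ?m - t * f (x2, y2) \<le> (1 - t) * ?g x1" for y2
    by (rule INF_ge) (use bound t in auto)
  then have "?g ?m - (1 - t) * ?g x1 \<le> t * ?g x2"
    by (intro INF_ge t) (simp add: algebra_simps)
  then show "?g ?m \<le> (1 - t) * ?g x1 + t * ?g x2" by simp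
qed simp

definition is_proximal_map :: "('a::real_inner \<Rightarrow> real) \<Rightarrow> ('a \<Rightarrow> 'a) \<Rightarrow> bool" where
  "is_proximal_map h R \<longleftrightarrow> (\<forall>w p. R w = p \<longleftrightarrow> w \<in> (\<lambda>v. p + v) ` subgrad h p)"

lemma proximal_map_subgrad:
  assumes "is_proximal_map h R"
  shows "w - R w \<in> subgrad h (R w)"
proof -
  from assms have "w \<in> (\<lambda>v. R w + v) ` subgrad h (R w)"
    unfolding is_proximal_map_def by blast
  then show ?thesis by (metis add_diff_cancel_left' imageE)
qed

lemma proximal_map_firmly_nonexpansive:
  assumes "convex_on UNIV h" "is_proximal_map h R"
  shows "(norm (R w1 - R w2))\<^sup>2 \<le> (w1 - w2) \<bullet> (R w1 - R w2)"
  using subgrad_monotone[OF assms(1) proximal_map_subgrad[OF assms(2)] proximal_map_subgrad[OF assms(2)],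
      of w1 w2]
  by (simp add: power2_norm_eq_inner inner_diff_left)

lemma proximal_map_lipschitz:
  assumes "convex_on UNIV h" "is_proximal_map h R"
  shows "1-lipschitz_on U R"
proof (rule lipschitz_onI)
  fix w1 w2
  have "(norm (R w1 - R w2))\<^sup>2 \<le> norm (w1 - w2) * norm (R w1 - R w2)"
    using proximal_map_firmly_nonexpansive[OF assms] norm_cauchy_schwarz order_trans by blast
  then show "dist (R w1) (R w2) \<le> 1 * dist w1 w2"
    by (cases "R w1 = R w2") (simp_all add: dist_norm power2_eq_square mult_le_cancel_right)
qed simp

lemma proximal_map_snd_residual_lower_bound:
  fixes f :: "'a::real_inner \<times> 'b::real_inner \<Rightarrow> real"
  assumes \<sigma>: "\<sigma> > 0" and f: "convex_on UNIV f"
    and k: "convex_on UNIV (\<lambda>(x, y). f (x, y) - \<sigma> / 2 * (norm y)\<^sup>2)"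
    and R: "is_proximal_map f R"
  shows "\<sigma> / (\<sigma> + 2) * norm (y1 - y2)
    \<le> norm ((y1 - snd (R (a, y1))) - (y2 - snd (R (a, y2))))"
proof -
  obtain p1 q1 p2 q2 where R12: "R (a, y1) = (p1, q1)" "R (a, y2) = (p2, q2)" by fastforce
  define D where "D = (y1 - q1) - (y2 - q2)"
  define E where "E = q1 - q2"
  have "(a, y1) - R (a, y1) - ((a, y2) - R (a, y2)) = (- (p1 - p2), D)"
    by (simp add: R12 D_def)
  moreover have "- (p1 - p2) \<bullet> (p1 - p2) = - (norm (p1 - p2))\<^sup>2"
    by (metis inner_minus_left power2_norm_eq_inner)
  ultimately have "\<sigma> / 2 * (norm E)\<^sup>2 \<le> D \<bullet> E - (norm (p1 - p2))\<^sup>2"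
    using subgrad_strongly_monotone_snd[OF f k proximal_map_subgrad[OF R] proximal_map_subgrad[OF R],
        of "(a, y1)" "(a, y2)"]
    by (simp add: R12 E_def)
  also have "\<dots> \<le> norm D * norm E"
    using norm_cauchy_schwarz[of D E] zero_le_power2[of "norm (p1 - p2)"] by linarith
  finally have DE: "\<sigma> / 2 * norm E \<le> norm D"
    by (cases "E = 0") (simp_all add: power2_eq_square mult_le_cancel_right)
  have "norm (y1 - y2) \<le> norm D + norm E"
    using norm_triangle_ineq[of D E] by (simp add: D_def E_def)
  then have "\<sigma> * norm (y1 - y2) \<le> \<sigma> * (norm D + norm E)"
    using \<sigma> by (simp add: mult_left_mono)
  also have "\<dots> \<le> (\<sigma> + 2) * norm D"
    using DE by (simp add: algebra_simps)
  finally have "\<sigma> * norm (y1 - y2) \<le> (\<sigma> + 2) * norm D" .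
  then have "\<sigma> / (\<sigma> + 2) * norm (y1 - y2) \<le> norm D"
    using \<sigma> by (simp add: field_simps)
  then show ?thesis
    by (simp add: R12 D_def)
qed

lemma lipschitz_on_fst: "1-lipschitz_on U fst"
  by (rule lipschitz_onI) (simp_all add: dist_fst_le)

lemma lipschitz_on_snd: "1-lipschitz_on U snd"
  by (rule lipschitz_onI) (simp_all add: dist_snd_le)

theorem lemma2p14:
  fixes f :: "'a::euclidean_space \<times> 'b::euclidean_space \<Rightarrow> real"
    and g :: "'a \<Rightarrow> real"
    and H1 :: "'a \<Rightarrow> 'a"
    and H :: "'a \<times> 'b \<Rightarrow> 'a \<times> 'b"
    and J :: "'a \<times> 'a \<times> 'b \<Rightarrow> 'b"
  assumes f_convex: "convex_on UNIV f"
    and g_finite: "\<And>x. bdd_below (range (\<lambda>y. f (x, y)))"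
    and g_def: "\<And>x. g x = (INF y. f (x, y))"
    and H1_inv: "\<And>u x. H1 u = x \<longleftrightarrow> u \<in> (\<lambda>v. x + v) ` subgrad g x"
    and H_inv: "\<And>w p. H w = p \<longleftrightarrow> w \<in> (\<lambda>v. p + v) ` subgrad f p"
    and J_def: "\<And>x u y. J (x, u, y) = y - snd (H (H1 (x + u) + u, y))"
  shows "(\<exists>L. L-lipschitz_on UNIV J) \<and>
         ((\<exists>\<sigma>>0. convex_on UNIV (\<lambda>(x, y). f (x, y) - \<sigma> / 2 * (norm y)\<^sup>2)) \<longrightarrow>
          (\<exists>lam>0. \<forall>x u y1 y2.
              norm (J (x, u, y1) - J (x, u, y2)) \<ge> lam * norm (y1 - y2)))"
proof (intro conjI impI)
  have H1: "is_proximal_map g H1" and H: "is_proximal_map f H"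
    using H1_inv H_inv by (simp_all add: is_proximal_map_def)
  have "g = (\<lambda>x. INF y. f (x, y))"
    using g_def by blast
  then have "convex_on UNIV g"
    using convex_on_partial_INF[OF f_convex g_finite] by simp
  then have H1_lip: "1-lipschitz_on U H1" for U
    using proximal_map_lipschitz[OF _ H1] by blast
  have H_lip: "1-lipschitz_on U H" for U
    using proximal_map_lipschitz[OF f_convex H] by blast
  have J_eq: "J = (\<lambda>P. snd (snd P) - snd (H (H1 (fst P + fst (snd P)) + fst (snd P), snd (snd P))))"
    by (simp add: fun_eq_iff J_def)
  show "\<exists>L. L-lipschitz_on UNIV J"
    unfolding J_eq by (rule exI) (rule H_lip H1_lip lipschitz_on_fst lipschitz_on_snd lipschitz_on_diff
        lipschitz_on_add lipschitz_on_Pair lipschitz_on_compose2[of _ _ _ _ snd]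
        lipschitz_on_compose2[of _ _ _ _ fst] lipschitz_on_compose2[of _ _ _ _ H]
        lipschitz_on_compose2[of _ _ _ _ H1])+
  assume "\<exists>\<sigma>>0. convex_on UNIV (\<lambda>(x, y). f (x, y) - \<sigma> / 2 * (norm y)\<^sup>2)"
  then obtain \<sigma> where \<sigma>: "\<sigma> > 0"
    and k: "convex_on UNIV (\<lambda>(x, y). f (x, y) - \<sigma> / 2 * (norm y)\<^sup>2)"
    by blast
  show "\<exists>lam>0. \<forall>x u y1 y2. norm (J (x, u, y1) - J (x, u, y2)) \<ge> lam * norm (y1 - y2)"
    using proximal_map_snd_residual_lower_bound[OF \<sigma> f_convex k H] \<sigma>
    by (intro exI[of _ "\<sigma> / (\<sigma> + 2)"] conjI allI) (simp_all add: J_def)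
qed

end
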